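(* Let $(\dot E,\Lambda)$ be a B-hypergraph. Then $(\mathrm{AT}(\dot E,\Lambda),\le)$ is a lattice: $\le$ is a partial order and any two admissible triples have a supremum and an infimum.
   Context: A graph $E=(E^0,E^1,r,s)$. A bi-separated graph with distinguished subsets is $\dot E=(E,(C,S),(D,T))$: $C=\bigsqcup_v C_v$ with $C_v$ a partition of $s^{-1}(v)$ into nonempty sets for each non-sink $v$; $D=\bigsqcup_v D_v$ with $D_v$ a partition of $r^{-1}(v)$ for each non-source $v$; $|X\cap Y|\le 1$ for $X\in C$, $Y\in D$; $C_{\rm fin},D_{\rm fin}$ the finite members, $S\subseteq C_{\rm fin}$, $T\subseteq D_{\rm fin}$. For $X\in C$, $s(X)$ is the common source of its edges; for $Y\in D$, $r(Y)$ the common range. A B-hypergraph is a pair $(\dot E,\Lambda)$ with $\Lambda$ a nonempty set and, for each $\lambda\in\Lambda$, subsets $\mathcal X_\lambda\subseteq C$, $\mathcal Y_\lambda\subseteq D$, such that: (i) $X\notin S$, $Y\notin T$ implies $X\cap Y=\emptyset$; (ii) $\alpha\ne\beta$, $X\in\mathcal X_\alpha$, $Y\in\mathcal Y_\beta$ implies $X\cap Y=\emptyset$; (iii) $X\in\mathcal X_\lambda$, $Y\in\mathcal Y_\lambda$ implies $X\cap Y\ne\emptyset$; (iv) $\Lambda=\Lambda_T^S\sqcup\Lambda^S_{\rm fin}\sqcup\Lambda^S_\infty\sqcup\Lambda_T^{\rm fin}\sqcup\Lambda_T^\infty$ such that, with $\Lambda^S=\Lambda_T^S\sqcup\Lambda^S_{\rm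 fin}\sqcup\Lambda^S_\infty$ and $\Lambda_T=\Lambda_T^S\sqcup\Lambda_T^{\rm fin}\sqcup\Lambda_T^\infty$: $S=\bigsqcup_{\lambda\in\Lambda^S}\mathcal X_\lambda$, $T=\bigsqcup_{\lambda\in\Lambda_T}\mathcal Y_\lambda$, $C_{\rm fin}\setminus S=\bigsqcup_{\lambda\in\Lambda_T^{\rm fin}}\mathcal X_\lambda$, $D_{\rm fin}\setminus T=\bigsqcup_{\lambda\in\Lambda^S_{\rm fin}}\mathcal Y_\lambda$, $C\setminus C_{\rm fin}=\bigsqcup_{\lambda\in\Lambda_T^\infty}\mathcal X_\lambda$, $D\setminus D_{\rm fin}=\bigsqcup_{\lambda\in\Lambda^S_\infty}\mathcal Y_\lambda$. For $\lambda\in\Lambda$, $s(\lambda)=\{s(X):X\in\mathcal X_\lambda\}$, $r(\lambda)=\{r(Y):Y\in\mathcal Y_\lambda\}$. A subset $V\subseteq E^0$ is bisaturated if for every $\lambda\in\Lambda_T^S$: $s(\lambda)\subseteq V\iff r(\lambda)\subseteq V$. For bisaturated $V$ and $\lambda\in\Lambda$, let $\mathcal X_{\lambda/V}=\{X\in\mathcal X_\lambda: s(X)\notin V\}$, $\mathcal Y_{\lambda/V}=\{Y\in\mathcal Y_\lambda: r(Y)\notin V\}$, and define $\Lambda_T^S/V=\{\lambda\in\Lambda_T^S: \mathcal X_{\lambda/V}\ne\emptyset\}$, $\Lambda^S_{\rm fin}/V=\{\lambda\in\Lambda^S_{\rm fin}:\mathcal X_{\lambda/V}\ne\emptyset\}$,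 $\Lambda^S_\infty/V=\{\lambda\in\Lambda^S_\infty: 0<|\mathcal X_{\lambda/V}|<\infty\}$, $\Lambda_T^{\rm fin}/V=\{\lambda\in\Lambda_T^{\rm fin}:\mathcal Y_{\lambda/V}\ne\emptyset\}$, $\Lambda_T^\infty/V=\{\lambda\in\Lambda_T^\infty:0<|\mathcal Y_{\lambda/V}|<\infty\}$, $\Lambda/V$ their union, $\Lambda^S(V)=\Lambda^S\setminus\Lambda/V$, $\Lambda_T(V)=\Lambda_T\setminus\Lambda/V$. An admissible triple is $(V,\Sigma,\Theta)$ with $V$ bisaturated, $\Sigma\subseteq\Lambda^S_{\rm fin}/V\sqcup\Lambda^S_\infty/V$, $\Theta\subseteq\Lambda_T^{\rm fin}/V\sqcup\Lambda_T^\infty/V$; $\mathrm{AT}(\dot E,\Lambda)$ is the set of them. Define $(V_1,\Sigma_1,\Theta_1)\le(V_2,\Sigma_2,\Theta_2)$ iff $V_1\subseteq V_2$, $\Sigma_1\subseteq\Sigma_2\sqcup\Lambda^S(V_2)$ and $\Theta_1\subseteq\Theta_2\sqcup\Lambda_T(V_2)$. *)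

theory Defs
  imports "HOL-Algebra.Lattice" "HOL-Library.Disjoint_Sets"
begin

text \<open>The five parts of the index set Lambda:
  KTS = Lambda_T^S, KSfin = Lambda^S_fin, KSinf = Lambda^S_infty,
  KTfin = Lambda_T^fin, KTinf = Lambda_T^infty.\<close>
datatype lkind = KTS | KSfin | KSinf | KTfin | KTinf

record ('v, 'e, 'l) bhyp =
  bh_V :: "'v set"
  bh_E :: "'e set"
  bh_r :: "'e \<Rightarrow> 'v"
  bh_s :: "'e \<Rightarrow> 'v"
  bh_C :: "'e set set"
  bh_S :: "'e set set"
  bh_D :: "'e set set"
  bh_T :: "'e set set"
  bh_Lam :: "'l set"
  bh_X :: "'l \<Rightarrow> 'e set set"
  bh_Y :: "'l \<Rightarrow> 'e set set"
  bh_kind :: "'l \<Rightarrow> lkind"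

definition bh_Cfin :: "('v,'e,'l) bhyp \<Rightarrow> 'e set set" where
  "bh_Cfin H = {X \<in> bh_C H. finite X}"

definition bh_Dfin :: "('v,'e,'l) bhyp \<Rightarrow> 'e set set" where
  "bh_Dfin H = {Y \<in> bh_D H. finite Y}"

definition bsrc :: "('v,'e,'l) bhyp \<Rightarrow> 'e set \<Rightarrow> 'v" where
  "bsrc H X = the_elem (bh_s H ` X)"

definition brng :: "('v,'e,'l) bhyp \<Rightarrow> 'e set \<Rightarrow> 'v" where
  "brng H Y = the_elem (bh_r H ` Y)"

definition lam_of :: "('v,'e,'l) bhyp \<Rightarrow> lkind set \<Rightarrow> 'l set" where
  "lam_of H K = {l \<in> bh_Lam H. bh_kind H l \<in> K}"

abbreviation "LamS H \<equiv> lam_of H {KTS, KSfin, KSinf}"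
abbreviation "LamT H \<equiv> lam_of H {KTS, KTfin, KTinf}"

definition disj_union :: "'l set \<Rightarrow> ('l \<Rightarrow> 'e set set) \<Rightarrow> 'e set set \<Rightarrow> bool" where
  "disj_union I A B \<longleftrightarrow> disjoint_family_on A I \<and> B = (\<Union>l\<in>I. A l)"

definition B_hypergraph :: "('v,'e,'l) bhyp \<Rightarrow> bool" where
  "B_hypergraph H \<longleftrightarrow>
     \<comment> \<open>graph\<close>
     (\<forall>e\<in>bh_E H. bh_r H e \<in> bh_V H \<and> bh_s H e \<in> bh_V H) \<and>
     \<comment> \<open>C = disjoint union of C_v, C_v a partition of s^{-1}(v), v non-sink\<close>
     (\<exists>Cv. (\<forall>v\<in>bh_V H. {e\<in>bh_E H. bh_s H e = v} \<noteq> {} \<longrightarrow>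
                partition_on {e\<in>bh_E H. bh_s H e = v} (Cv v)) \<and>
           bh_C H = (\<Union>v\<in>{v\<in>bh_V H. {e\<in>bh_E H. bh_s H e = v} \<noteq> {}}. Cv v)) \<and>
     \<comment> \<open>D = disjoint union of D_v, D_v a partition of r^{-1}(v), v non-source\<close>
     (\<exists>Dv. (\<forall>v\<in>bh_V H. {e\<in>bh_E H. bh_r H e = v} \<noteq> {} \<longrightarrow>
                partition_on {e\<in>bh_E H. bh_r H e = v} (Dv v)) \<and>
           bh_D H = (\<Union>v\<in>{v\<in>bh_V H. {e\<in>bh_E H. bh_r H e = v} \<noteq> {}}. Dv v)) \<and>
     (\<forall>X\<in>bh_C H. \<forall>Y\<in>bh_D H. card (X \<inter> Y) \<le> 1 \<and> finite (X \<inter> Y)) \<and>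
     bh_S H \<subseteq> bh_Cfin H \<and> bh_T H \<subseteq> bh_Dfin H \<and>
     \<comment> \<open>hypergraph data\<close>
     bh_Lam H \<noteq> {} \<and>
     (\<forall>l\<in>bh_Lam H. bh_X H l \<subseteq> bh_C H \<and> bh_Y H l \<subseteq> bh_D H) \<and>
     \<comment> \<open>(i)\<close>
     (\<forall>X\<in>bh_C H. \<forall>Y\<in>bh_D H. X \<notin> bh_S H \<and> Y \<notin> bh_T H \<longrightarrow> X \<inter> Y = {}) \<and>
     \<comment> \<open>(ii)\<close>
     (\<forall>a\<in>bh_Lam H. \<forall>b\<in>bh_Lam H. a \<noteq> b \<longrightarrow>
        (\<forall>X\<in>bh_X H a. \<forall>Y\<in>bh_Y H b. X \<inter> Y = {})) \<and>
     \<comment> \<open>(iii)\<close>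
     (\<forall>l\<in>bh_Lam H. \<forall>X\<in>bh_X H l. \<forall>Y\<in>bh_Y H l. X \<inter> Y \<noteq> {}) \<and>
     \<comment> \<open>(iv)\<close>
     disj_union (LamS H) (bh_X H) (bh_S H) \<and>
     disj_union (LamT H) (bh_Y H) (bh_T H) \<and>
     disj_union (lam_of H {KTfin}) (bh_X H) (bh_Cfin H - bh_S H) \<and>
     disj_union (lam_of H {KSfin}) (bh_Y H) (bh_Dfin H - bh_T H) \<and>
     disj_union (lam_of H {KTinf}) (bh_X H) (bh_C H - bh_Cfin H) \<and>
     disj_union (lam_of H {KSinf}) (bh_Y H) (bh_D H - bh_Dfin H)"

definition lam_src :: "('v,'e,'l) bhyp \<Rightarrow> 'l \<Rightarrow> 'v set" where
  "lam_src H l = bsrc H ` bh_X H l"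

definition lam_rng :: "('v,'e,'l) bhyp \<Rightarrow> 'l \<Rightarrow> 'v set" where
  "lam_rng H l = brng H ` bh_Y H l"

definition bisaturated :: "('v,'e,'l) bhyp \<Rightarrow> 'v set \<Rightarrow> bool" where
  "bisaturated H V \<longleftrightarrow> V \<subseteq> bh_V H \<and>
     (\<forall>l\<in>lam_of H {KTS}. lam_src H l \<subseteq> V \<longleftrightarrow> lam_rng H l \<subseteq> V)"

definition Xq :: "('v,'e,'l) bhyp \<Rightarrow> 'l \<Rightarrow> 'v set \<Rightarrow> 'e set set" where
  "Xq H l V = {X \<in> bh_X H l. bsrc H X \<notin> V}"

definition Yq :: "('v,'e,'l) bhyp \<Rightarrow> 'l \<Rightarrow> 'v set \<Rightarrow> 'e set set" where
  "Yq H l V = {Y \<in> bh_Y H l. brng H Y \<notin> V}"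

text \<open>Lambda/V restricted to the kinds in K.\<close>
definition LamQ :: "('v,'e,'l) bhyp \<Rightarrow> lkind set \<Rightarrow> 'v set \<Rightarrow> 'l set" where
  "LamQ H K V = {l \<in> lam_of H K.
      (bh_kind H l = KTS \<and> Xq H l V \<noteq> {}) \<or>
      (bh_kind H l = KSfin \<and> Xq H l V \<noteq> {}) \<or>
      (bh_kind H l = KSinf \<and> 0 < card (Xq H l V) \<and> finite (Xq H l V)) \<or>
      (bh_kind H l = KTfin \<and> Yq H l V \<noteq> {}) \<or>
      (bh_kind H l = KTinf \<and> 0 < card (Yq H l V) \<and> finite (Yq H l V))}"

abbreviation "LamAll \<equiv> {KTS, KSfin, KSinf, KTfin, KTinf}"

definition LamS_V :: "('v,'e,'l) bhyp \<Rightarrow> 'v set \<Rightarrow> 'l set" where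
  "LamS_V H V = LamS H - LamQ H LamAll V"

definition LamT_V :: "('v,'e,'l) bhyp \<Rightarrow> 'v set \<Rightarrow> 'l set" where
  "LamT_V H V = LamT H - LamQ H LamAll V"

definition AT :: "('v,'e,'l) bhyp \<Rightarrow> ('v set \<times> 'l set \<times> 'l set) set" where
  "AT H = {(V, Sg, Th). bisaturated H V \<and>
             Sg \<subseteq> LamQ H {KSfin, KSinf} V \<and> Th \<subseteq> LamQ H {KTfin, KTinf} V}"

definition at_le :: "('v,'e,'l) bhyp \<Rightarrow> ('v set \<times> 'l set \<times> 'l set) \<Rightarrow> ('v set \<times> 'l set \<times> 'l set) \<Rightarrow> bool" where
  "at_le H a b = (case a of (V1, S1, T1) \<Rightarrow> case b of (V2, S2, T2) \<Rightarrow>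
      V1 \<subseteq> V2 \<and> S1 \<subseteq> S2 \<union> LamS_V H V2 \<and> T1 \<subseteq> T2 \<union> LamT_V H V2)"

definition AT_order :: "('v,'e,'l) bhyp \<Rightarrow> ('v set \<times> 'l set \<times> 'l set) gorder" where
  "AT_order H = \<lparr>carrier = AT H, eq = (=), le = at_le H\<rparr>"

end

theory Submission
  imports Defs
begin

text \<open>For \<lambda> of kind Lambda^S_fin or Lambda^S_infty lying in Lambda/V, and W \<supseteq> V, the index
  \<lambda> lies in Lambda^S(W) exactly when no X in X_\<lambda> has its source outside W: the finiteness of
  X_\<lambda>/V required for \<lambda> \<in> Lambda^S_infty is inherited by the smaller set X_\<lambda>/W. Hence
  membership in Lambda^S(W) only grows with W, which makes \<le> transitive; antisymmetry holds
  because \<Sigma> \<subseteq> Lambda/V is disjoint from Lambda^S(V). The same holds on the \<Theta>-side.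
  The join of (V1, \<Sigma>1, \<Theta>1) and (V2, \<Sigma>2, \<Theta>2) has as first entry the smallest bisaturated
  W containing V1 \<union> V2 and keeps those indices of \<Sigma>1 \<union> \<Sigma>2 that still lie in Lambda/W;
  the meet has first entry V1 \<inter> V2 and keeps the indices of Lambda/(V1 \<inter> V2) lying below
  both triples.\<close>

lemma the_elem_image_of_fibre_block:
  assumes "partition_on {e \<in> E. f e = v} P" "X \<in> P"
  shows "the_elem (f ` X) = v"
proof -
  have "X \<noteq> {}" "X \<subseteq> {e \<in> E. f e = v}"
    using assms unfolding partition_on_def by auto
  then have "f ` X = {v}" by auto
  then show ?thesis by simp
qed

lemma B_hypergraph_source_partition:
  assumes "B_hypergraph H"
  obtains Cv where
    "\<forall>v\<in>bh_V H. {e\<in>bh_E H. bh_s H e = v} \<noteq> {} \<longrightarrow>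
        partition_on {e\<in>bh_E H. bh_s H e = v} (Cv v)"
    "bh_C H = (\<Union>v\<in>{v\<in>bh_V H. {e\<in>bh_E H. bh_s H e = v} \<noteq> {}}. Cv v)"
proof -
  have "\<exists>Cv. (\<forall>v\<in>bh_V H. {e\<in>bh_E H. bh_s H e = v} \<noteq> {} \<longrightarrow>
          partition_on {e\<in>bh_E H. bh_s H e = v} (Cv v)) \<and>
        bh_C H = (\<Union>v\<in>{v\<in>bh_V H. {e\<in>bh_E H. bh_s H e = v} \<noteq> {}}. Cv v)"
    using assms unfolding B_hypergraph_def by (elim conjE) assumption
  then show thesis using that by blast
qed

lemma B_hypergraph_range_partition:
  assumes "B_hypergraph H"
  obtains Dv where
    "\<forall>v\<in>bh_V H. {e\<in>bh_E H. bh_r H e = v} \<noteq> {} \<longrightarrow>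
        partition_on {e\<in>bh_E H. bh_r H e = v} (Dv v)"
    "bh_D H = (\<Union>v\<in>{v\<in>bh_V H. {e\<in>bh_E H. bh_r H e = v} \<noteq> {}}. Dv v)"
proof -
  have "\<exists>Dv. (\<forall>v\<in>bh_V H. {e\<in>bh_E H. bh_r H e = v} \<noteq> {} \<longrightarrow>
          partition_on {e\<in>bh_E H. bh_r H e = v} (Dv v)) \<and>
        bh_D H = (\<Union>v\<in>{v\<in>bh_V H. {e\<in>bh_E H. bh_r H e = v} \<noteq> {}}. Dv v)"
    using assms unfolding B_hypergraph_def by (elim conjE) assumption
  then show thesis using that by blast
qed

lemma B_hypergraph_blocks_subset:
  assumes "B_hypergraph H" "l \<in> bh_Lam H"
  shows "bh_X H l \<subseteq> bh_C H" "bh_Y H l \<subseteq> bh_D H"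
proof -
  have "\<forall>l\<in>bh_Lam H. bh_X H l \<subseteq> bh_C H \<and> bh_Y H l \<subseteq> bh_D H"
    using assms(1) unfolding B_hypergraph_def by (elim conjE) assumption
  then show "bh_X H l \<subseteq> bh_C H" "bh_Y H l \<subseteq> bh_D H" using assms(2) by blast+
qed

lemma bsrc_in_vertices:
  assumes "B_hypergraph H" "X \<in> bh_C H"
  shows "bsrc H X \<in> bh_V H"
proof -
  obtain Cv where
    part: "\<forall>v\<in>bh_V H. {e\<in>bh_E H. bh_s H e = v} \<noteq> {} \<longrightarrow>
                partition_on {e\<in>bh_E H. bh_s H e = v} (Cv v)"
    and C: "bh_C H = (\<Union>v\<in>{v\<in>bh_V H. {e\<in>bh_E H. bh_s H e = v} \<noteq> {}}. Cv v)"
    using B_hypergraph_source_partition[OF assms(1)] by blast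
  from assms(2) C obtain v where "v \<in> bh_V H" "{e\<in>bh_E H. bh_s H e = v} \<noteq> {}" "X \<in> Cv v"
    by blast
  with part have "the_elem (bh_s H ` X) = v"
    by (intro the_elem_image_of_fibre_block) auto
  with \<open>v \<in> bh_V H\<close> show ?thesis by (simp add: bsrc_def)
qed

lemma brng_in_vertices:
  assumes "B_hypergraph H" "Y \<in> bh_D H"
  shows "brng H Y \<in> bh_V H"
proof -
  obtain Dv where
    part: "\<forall>v\<in>bh_V H. {e\<in>bh_E H. bh_r H e = v} \<noteq> {} \<longrightarrow>
                partition_on {e\<in>bh_E H. bh_r H e = v} (Dv v)"
    and D: "bh_D H = (\<Union>v\<in>{v\<in>bh_V H. {e\<in>bh_E H. bh_r H e = v} \<noteq> {}}. Dv v)"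
    using B_hypergraph_range_partition[OF assms(1)] by blast
  from assms(2) D obtain v where "v \<in> bh_V H" "{e\<in>bh_E H. bh_r H e = v} \<noteq> {}" "Y \<in> Dv v"
    by blast
  with part have "the_elem (bh_r H ` Y) = v"
    by (intro the_elem_image_of_fibre_block) auto
  with \<open>v \<in> bh_V H\<close> show ?thesis by (simp add: brng_def)
qed

lemma bisaturated_vertices:
  assumes "B_hypergraph H"
  shows "bisaturated H (bh_V H)"
proof -
  have "lam_src H l \<subseteq> bh_V H \<and> lam_rng H l \<subseteq> bh_V H" if "l \<in> bh_Lam H" for l
    using B_hypergraph_blocks_subset[OF assms that]
      bsrc_in_vertices[OF assms] brng_in_vertices[OF assms]
    unfolding lam_src_def lam_rng_def by blast
  then show ?thesis unfolding bisaturated_def lam_of_def by auto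
qed

lemma bisaturated_Inter:
  "F \<noteq> {} \<Longrightarrow> (\<And>V. V \<in> F \<Longrightarrow> bisaturated H V) \<Longrightarrow> bisaturated H (\<Inter>F)"
  unfolding bisaturated_def by blast

lemma bisaturated_Int:
  "bisaturated H A \<Longrightarrow> bisaturated H B \<Longrightarrow> bisaturated H (A \<inter> B)"
  unfolding bisaturated_def by blast

definition bisaturated_hull :: "('v,'e,'l) bhyp \<Rightarrow> 'v set \<Rightarrow> 'v set" where
  "bisaturated_hull H A = \<Inter>{V. bisaturated H V \<and> A \<subseteq> V}"

lemma bisaturated_hull_subset: "A \<subseteq> bisaturated_hull H A"
  unfolding bisaturated_hull_def by blast

lemma bisaturated_hull_least:
  "bisaturated H V \<Longrightarrow> A \<subseteq> V \<Longrightarrow> bisaturated_hull H A \<subseteq> V"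
  unfolding bisaturated_hull_def by blast

lemma bisaturated_bisaturated_hull:
  assumes "B_hypergraph H" "A \<subseteq> bh_V H"
  shows "bisaturated H (bisaturated_hull H A)"
  unfolding bisaturated_hull_def
  using assms bisaturated_vertices by (intro bisaturated_Inter) auto

lemma Xq_antimono: "V \<subseteq> W \<Longrightarrow> Xq H l W \<subseteq> Xq H l V"
  unfolding Xq_def by blast

lemma Yq_antimono: "V \<subseteq> W \<Longrightarrow> Yq H l W \<subseteq> Yq H l V"
  unfolding Yq_def by blast

lemma LamS_V_iff_not_LamQ:
  "l \<in> LamQ H {KSfin, KSinf} V \<Longrightarrow> l \<in> LamS_V H W \<longleftrightarrow> l \<notin> LamQ H {KSfin, KSinf} W"
  unfolding LamS_V_def LamQ_def lam_of_def by auto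

lemma LamT_V_iff_not_LamQ:
  "l \<in> LamQ H {KTfin, KTinf} V \<Longrightarrow> l \<in> LamT_V H W \<longleftrightarrow> l \<notin> LamQ H {KTfin, KTinf} W"
  unfolding LamT_V_def LamQ_def lam_of_def by auto

lemma LamQ_S_iff_Xq_nonempty:
  assumes "l \<in> LamQ H {KSfin, KSinf} V" "V \<subseteq> W"
  shows "l \<in> LamQ H {KSfin, KSinf} W \<longleftrightarrow> Xq H l W \<noteq> {}"
proof -
  have kind: "l \<in> bh_Lam H" "bh_kind H l = KSfin \<or> bh_kind H l = KSinf"
    using assms(1) unfolding LamQ_def lam_of_def by auto
  have "finite (Xq H l W)" if "bh_kind H l = KSinf"
  proof -
    have "finite (Xq H l V)" using assms(1) that unfolding LamQ_def by auto
    then show ?thesis by (rule finite_subset[OF Xq_antimono[OF assms(2)]])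
  qed
  then show ?thesis
    using kind unfolding LamQ_def lam_of_def by (auto simp: card_gt_0_iff)
qed

lemma LamQ_T_iff_Yq_nonempty:
  assumes "l \<in> LamQ H {KTfin, KTinf} V" "V \<subseteq> W"
  shows "l \<in> LamQ H {KTfin, KTinf} W \<longleftrightarrow> Yq H l W \<noteq> {}"
proof -
  have kind: "l \<in> bh_Lam H" "bh_kind H l = KTfin \<or> bh_kind H l = KTinf"
    using assms(1) unfolding LamQ_def lam_of_def by auto
  have "finite (Yq H l W)" if "bh_kind H l = KTinf"
  proof -
    have "finite (Yq H l V)" using assms(1) that unfolding LamQ_def by auto
    then show ?thesis by (rule finite_subset[OF Yq_antimono[OF assms(2)]])
  qed
  then show ?thesis
    using kind unfolding LamQ_def lam_of_def by (auto simp: card_gt_0_iff)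
qed

lemma LamS_V_mono:
  assumes "l \<in> LamQ H {KSfin, KSinf} V" "V \<subseteq> W" "W \<subseteq> W'" "l \<in> LamS_V H W"
  shows "l \<in> LamS_V H W'"
proof -
  have "Xq H l W = {}"
    using assms(4) LamS_V_iff_not_LamQ[OF assms(1)] LamQ_S_iff_Xq_nonempty[OF assms(1,2)] by blast
  then have "Xq H l W' = {}" using Xq_antimono[OF assms(3), of H l] by blast
  then show ?thesis
    using LamS_V_iff_not_LamQ[OF assms(1)] LamQ_S_iff_Xq_nonempty[OF assms(1) order_trans[OF assms(2,3)]]
    by blast
qed

lemma LamT_V_mono:
  assumes "l \<in> LamQ H {KTfin, KTinf} V" "V \<subseteq> W" "W \<subseteq> W'" "l \<in> LamT_V H W"
  shows "l \<in> LamT_V H W'"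
proof -
  have "Yq H l W = {}"
    using assms(4) LamT_V_iff_not_LamQ[OF assms(1)] LamQ_T_iff_Yq_nonempty[OF assms(1,2)] by blast
  then have "Yq H l W' = {}" using Yq_antimono[OF assms(3), of H l] by blast
  then show ?thesis
    using LamT_V_iff_not_LamQ[OF assms(1)] LamQ_T_iff_Yq_nonempty[OF assms(1) order_trans[OF assms(2,3)]]
    by blast
qed

lemma at_le_iff:
  "at_le H (V1, S1, T1) (V2, S2, T2) \<longleftrightarrow>
     V1 \<subseteq> V2 \<and> S1 \<subseteq> S2 \<union> LamS_V H V2 \<and> T1 \<subseteq> T2 \<union> LamT_V H V2"
  by (simp add: at_le_def)

lemma mem_AT_iff:
  "(V, S, T) \<in> AT H \<longleftrightarrow>
     bisaturated H V \<and> S \<subseteq> LamQ H {KSfin, KSinf} V \<and> T \<subseteq> LamQ H {KTfin, KTinf} V"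
  by (simp add: AT_def)

lemma at_le_antisym:
  assumes "(V1, S1, T1) \<in> AT H" "(V2, S2, T2) \<in> AT H"
    and "at_le H (V1, S1, T1) (V2, S2, T2)" "at_le H (V2, S2, T2) (V1, S1, T1)"
  shows "(V1, S1, T1) = (V2, S2, T2)"
proof -
  have V: "V1 = V2" using assms(3,4) unfolding at_le_iff by blast
  have "S1 \<subseteq> S2" "S2 \<subseteq> S1" "T1 \<subseteq> T2" "T2 \<subseteq> T1"
    using assms LamS_V_iff_not_LamQ[of _ H V1 V1] LamT_V_iff_not_LamQ[of _ H V1 V1]
    unfolding V at_le_iff mem_AT_iff by blast+
  with V show ?thesis by simp
qed

lemma at_le_trans:
  assumes "(V1, S1, T1) \<in> AT H"
    and "at_le H (V1, S1, T1) (V2, S2, T2)" "at_le H (V2, S2, T2) (V3, S3, T3)"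
  shows "at_le H (V1, S1, T1) (V3, S3, T3)"
  using assms LamS_V_mono[of _ H V1 V2 V3] LamT_V_mono[of _ H V1 V2 V3]
  unfolding at_le_iff mem_AT_iff by blast

lemma partial_order_AT_order: "partial_order (AT_order H)"
proof
  fix x y z
  assume xy: "x \<in> carrier (AT_order H)" "y \<in> carrier (AT_order H)"
  show "x \<sqsubseteq>\<^bsub>AT_order H\<^esub> y \<Longrightarrow> y \<sqsubseteq>\<^bsub>AT_order H\<^esub> x \<Longrightarrow> x .=\<^bsub>AT_order H\<^esub> y"
    using xy at_le_antisym[of "fst x" "fst (snd x)" "snd (snd x)" H "fst y" "fst (snd y)" "snd (snd y)"]
    by (simp add: AT_order_def)
  show "x \<sqsubseteq>\<^bsub>AT_order H\<^esub> y \<Longrightarrow> y \<sqsubseteq>\<^bsub>AT_order H\<^esub> z \<Longrightarrow> x \<sqsubseteq>\<^bsub>AT_order H\<^esub> z"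
    using xy at_le_trans[of "fst x" "fst (snd x)" "snd (snd x)" H "fst y" "fst (snd y)" "snd (snd y)"
        "fst z" "fst (snd z)" "snd (snd z)"]
    by (simp add: AT_order_def)
qed (auto simp: AT_order_def at_le_def)

lemma at_le_restrict:
  assumes "(V, S, T) \<in> AT H" "V \<subseteq> W" "S \<subseteq> S'" "T \<subseteq> T'"
  shows "at_le H (V, S, T) (W, S' \<inter> LamQ H {KSfin, KSinf} W, T' \<inter> LamQ H {KTfin, KTinf} W)"
  using assms LamS_V_iff_not_LamQ[of _ H V W] LamT_V_iff_not_LamQ[of _ H V W]
  unfolding at_le_iff mem_AT_iff by blast

fun at_join :: "('v,'e,'l) bhyp \<Rightarrow> 'v set \<times> 'l set \<times> 'l set \<Rightarrow> 'v set \<times> 'l set \<times> 'l set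
    \<Rightarrow> 'v set \<times> 'l set \<times> 'l set" where
  "at_join H (V1, S1, T1) (V2, S2, T2) =
     (let W = bisaturated_hull H (V1 \<union> V2)
      in (W, (S1 \<union> S2) \<inter> LamQ H {KSfin, KSinf} W, (T1 \<union> T2) \<inter> LamQ H {KTfin, KTinf} W))"

fun at_meet :: "('v,'e,'l) bhyp \<Rightarrow> 'v set \<times> 'l set \<times> 'l set \<Rightarrow> 'v set \<times> 'l set \<times> 'l set
    \<Rightarrow> 'v set \<times> 'l set \<times> 'l set" where
  "at_meet H (V1, S1, T1) (V2, S2, T2) =
     (V1 \<inter> V2,
      LamQ H {KSfin, KSinf} (V1 \<inter> V2) \<inter> (S1 \<union> LamS_V H V1) \<inter> (S2 \<union> LamS_V H V2),
      LamQ H {KTfin, KTinf} (V1 \<inter> V2) \<inter> (T1 \<union> LamT_V H V1) \<inter> (T2 \<union> LamT_V H V2))"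

lemma least_at_join:
  assumes "B_hypergraph H" "a \<in> AT H" "b \<in> AT H"
  shows "least (AT_order H) (at_join H a b) (Upper (AT_order H) {a, b})"
proof -
  obtain V1 S1 T1 V2 S2 T2 where ab: "a = (V1, S1, T1)" "b = (V2, S2, T2)"
    by (cases a, cases b) auto
  define W where "W = bisaturated_hull H (V1 \<union> V2)"
  have join: "at_join H a b =
      (W, (S1 \<union> S2) \<inter> LamQ H {KSfin, KSinf} W, (T1 \<union> T2) \<inter> LamQ H {KTfin, KTinf} W)"
    using ab by (simp add: W_def Let_def)
  have V12: "V1 \<union> V2 \<subseteq> W" unfolding W_def by (rule bisaturated_hull_subset)
  have "V1 \<union> V2 \<subseteq> bh_V H" using assms(2,3) ab by (auto simp: mem_AT_iff bisaturated_def)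
  then have "bisaturated H W" unfolding W_def by (rule bisaturated_bisaturated_hull[OF assms(1)])
  then have "at_join H a b \<in> AT H" unfolding join by (simp add: mem_AT_iff)
  moreover have "at_le H x (at_join H a b)" if "x \<in> {a, b}" for x
    using that assms(2,3) ab V12 unfolding join by (auto intro: at_le_restrict)
  moreover have "at_le H (at_join H a b) u" if upper: "u \<in> Upper (AT_order H) {a, b}" for u
  proof -
    have "u \<in> AT H" "at_le H a u" "at_le H b u"
      using Upper_memD[OF upper, of a] Upper_memD[OF upper, of b] assms(2,3)
      by (simp_all add: AT_order_def)
    moreover obtain V S T where "u = (V, S, T)" by (cases u)
    ultimately have u: "u = (V, S, T)" "(V, S, T) \<in> AT H"
      "at_le H a (V, S, T)" "at_le H b (V, S, T)" by simp_all
    then have "W \<subseteq> V"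
      unfolding W_def using ab by (intro bisaturated_hull_least) (auto simp: at_le_iff mem_AT_iff)
    with u ab show ?thesis unfolding join by (auto simp: at_le_iff)
  qed
  ultimately show ?thesis
    using assms(2,3) by (intro least_UpperI) (auto simp: AT_order_def)
qed

lemma greatest_at_meet:
  assumes "a \<in> AT H" "b \<in> AT H"
  shows "greatest (AT_order H) (at_meet H a b) (Lower (AT_order H) {a, b})"
proof -
  obtain V1 S1 T1 V2 S2 T2 where ab: "a = (V1, S1, T1)" "b = (V2, S2, T2)"
    by (cases a, cases b) auto
  have meet: "at_meet H a b = (V1 \<inter> V2,
      LamQ H {KSfin, KSinf} (V1 \<inter> V2) \<inter> (S1 \<union> LamS_V H V1) \<inter> (S2 \<union> LamS_V H V2),
      LamQ H {KTfin, KTinf} (V1 \<inter> V2) \<inter> (T1 \<union> LamT_V H V1) \<inter> (T2 \<union> LamT_V H V2))"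
    using ab by simp
  have "at_meet H a b \<in> AT H"
    unfolding meet using assms ab by (auto simp: mem_AT_iff bisaturated_Int)
  moreover have "at_le H (at_meet H a b) x" if "x \<in> {a, b}" for x
    unfolding meet using that ab by (auto simp: at_le_iff)
  moreover have "at_le H u (at_meet H a b)" if lower: "u \<in> Lower (AT_order H) {a, b}" for u
  proof -
    have "u \<in> AT H" "at_le H u a" "at_le H u b"
      using Lower_memD[OF lower, of a] Lower_memD[OF lower, of b] assms
      by (simp_all add: AT_order_def)
    moreover obtain V S T where "u = (V, S, T)" by (cases u)
    ultimately have u: "u = (V, S, T)" "(V, S, T) \<in> AT H"
      "at_le H (V, S, T) a" "at_le H (V, S, T) b" by simp_all
    then show ?thesis
      unfolding meet using ab LamS_V_iff_not_LamQ[of _ H V] LamT_V_iff_not_LamQ[of _ H V]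
      by (auto simp: at_le_iff mem_AT_iff)
  qed
  ultimately show ?thesis
    using assms by (intro greatest_LowerI) (auto simp: AT_order_def)
qed

theorem mainTheorem8:
  fixes H :: "('v, 'e, 'l) bhyp"
  assumes "B_hypergraph H"
  shows "lattice (AT_order H)"
proof (intro lattice.intro upper_semilattice.intro lower_semilattice.intro partial_order_AT_order
    upper_semilattice_axioms.intro lower_semilattice_axioms.intro)
  fix a b assume "a \<in> carrier (AT_order H)" "b \<in> carrier (AT_order H)"
  then have "a \<in> AT H" "b \<in> AT H" by (simp_all add: AT_order_def)
  then show "\<exists>s. least (AT_order H) s (Upper (AT_order H) {a, b})"
    and "\<exists>s. greatest (AT_order H) s (Lower (AT_order H) {a, b})"
    using least_at_join[OF assms] greatest_at_meet by blast+
qed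

end
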